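(* Let $1+\frac1n<p<1+\frac{3}{2n}$ and $a\in\mathbb R^n\setminus\{0\}$. Define $S^*_{0,2}:\mathbb R^n\to\mathbb R$ by $$S^*_{0,2}(x)=\Big(\int_0^1a\cdot\nabla e^{(1-\theta)\Delta}\Big(G_\theta^{p-1}\int_0^\theta a\cdot\nabla e^{(\theta-\tau)\Delta}G_\tau^p\,d\tau\Big)d\theta\Big)(x).$$ Then $S^*_{0,2}$ is continuous and bounded, and $S^*_{0,2}(0)<0$; in particular $S^*_{0,2}\not\equiv0$.
   Context: $G_t(x)=(4\pi t)^{-n/2}e^{-|x|^2/(4t)}$ for $t>0$, $x\in\mathbb R^n$, and $e^{t\Delta}\varphi=G_t*\varphi$. $G_\theta^{p}$ denotes the pointwise $p$-th power of $G_\theta$. *)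

theory Defs
  imports "HOL-Analysis.Analysis"
begin

definition heat_kernel :: "real \<Rightarrow> real ^ 'n \<Rightarrow> real" where
  "heat_kernel t x = (4 * pi * t) powr (- (real CARD('n) / 2)) * exp (- (norm x)\<^sup>2 / (4 * t))"

definition heat_sg :: "real \<Rightarrow> (real ^ 'n \<Rightarrow> real) \<Rightarrow> real ^ 'n \<Rightarrow> real" where
  "heat_sg t \<phi> x = (\<integral> y. heat_kernel t (x - y) * \<phi> y \<partial>lborel)"

definition dir_deriv :: "real ^ 'n \<Rightarrow> (real ^ 'n \<Rightarrow> real) \<Rightarrow> real ^ 'n \<Rightarrow> real" where
  "dir_deriv a u x = deriv (\<lambda>h. u (x + h *\<^sub>R a)) 0"

definition S02 :: "real ^ 'n \<Rightarrow> real \<Rightarrow> real ^ 'n \<Rightarrow> real" where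
  "S02 a p x =
     (LINT \<theta>:{0<..<1}|lborel.
        dir_deriv a
          (heat_sg (1 - \<theta>)
             (\<lambda>y. heat_kernel \<theta> y powr (p - 1) *
                  (LINT \<tau>:{0<..<\<theta>}|lborel.
                     dir_deriv a (heat_sg (\<theta> - \<tau>) (\<lambda>z. heat_kernel \<tau> z powr p)) y)))
          x)"

end

theory Submission
  imports Defs "HOL-Probability.Probability"
begin

text \<open>
  All functions involved are Gaussians times polynomials, so everything is explicit.
  For \<open>0 < \<tau> < \<theta> < 1\<close> the heat flow \<open>e\<^bsup>(\<theta>-\<tau>)\<Delta>\<^esup>G\<^sub>\<tau>\<^sup>p\<close> is a centred Gaussian, its derivative
  in direction \<open>a\<close> brings down the linear factor \<open>a \<bullet> y\<close>, and multiplying by the Gaussian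
  \<open>G\<^sub>\<theta>\<^bsup>p-1\<^esup>\<close> and applying \<open>e\<^bsup>(1-\<theta>)\<Delta>\<^esup>\<close> (Fubini in \<open>\<tau>\<close>, then completing the square) gives again
  \<open>a \<bullet> x\<close> times a Gaussian. One more derivative in direction \<open>a\<close> shows that
  \<open>S\<^sup>*\<^sub>0\<^sub>,\<^sub>2(x)\<close> is the integral over the simplex \<open>0 < \<tau> < \<theta> < 1\<close> of an explicit kernel
  bounded by \<open>C (\<theta> \<tau>)\<^bsup>-q\<^esup>\<close>, \<open>q = n (p - 1) / 2 < 1\<close>. Dominated convergence yields continuity and a
  uniform bound, and at \<open>x = 0\<close> the kernel equals \<open>- |a|\<^sup>2\<close> times a positive amplitude.
\<close>

section \<open>Gaussian integrals on Euclidean space\<close>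

lemma has_bochner_integral_exp_neg_sq:
  "has_bochner_integral lborel (\<lambda>x::real. exp (- x\<^sup>2)) (sqrt pi)"
proof -
  have "has_bochner_integral lborel (\<lambda>x. sqrt pi * normal_density 0 (sqrt (1/2)) x) (sqrt pi * 1)"
    by (intro has_bochner_integral_mult_right) (simp add: has_bochner_integral_iff)
  moreover have "sqrt pi * normal_density 0 (sqrt (1/2)) x = exp (- x\<^sup>2)" for x
    by (simp add: normal_density_def real_sqrt_mult)
  ultimately show ?thesis by simp
qed

lemma has_bochner_integral_exp_neg_norm_sq:
  "has_bochner_integral lborel (\<lambda>x::'a::euclidean_space. exp (- (norm x)\<^sup>2)) (sqrt pi ^ DIM('a))"
proof -
  interpret product_sigma_finite "\<lambda>_::'a. lborel::real measure" ..
  have factor: "exp (- (norm (\<Sum>b\<in>Basis. f b *\<^sub>R b :: 'a))\<^sup>2) = (\<Prod>b\<in>Basis. exp (- (f b)\<^sup>2))" for f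
  proof -
    have "(norm (\<Sum>b\<in>Basis. f b *\<^sub>R b :: 'a))\<^sup>2 = (\<Sum>b\<in>Basis. (f b)\<^sup>2)"
      by (simp add: norm_eq_sqrt_inner inner_sum_left inner_sum_right inner_Basis sum.delta
          if_distrib cong: if_cong) (simp add: power2_eq_square abs_of_nonneg sum_nonneg)
    then show ?thesis by (simp add: exp_sum[symmetric] sum_negf)
  qed
  have "has_bochner_integral (Pi\<^sub>M (Basis::'a set) (\<lambda>_. lborel))
      (\<lambda>f. \<Prod>b\<in>Basis. exp (- (f b::real)\<^sup>2)) (sqrt pi ^ DIM('a))"
    using product_integrable_prod[of "Basis::'a set" "\<lambda>_ x. exp (- x\<^sup>2)"]
      product_integral_prod[of "Basis::'a set" "\<lambda>_ x. exp (- x\<^sup>2)"] has_bochner_integral_exp_neg_sq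
    by (simp add: has_bochner_integral_iff)
  moreover have m: "(\<lambda>f. \<Sum>b\<in>Basis. f b *\<^sub>R b :: 'a) \<in> measurable (Pi\<^sub>M Basis (\<lambda>_. lborel)) borel"
    by measurable
  ultimately show ?thesis
    unfolding has_bochner_integral_iff
    by (subst (1 2) lborel_eq, subst integrable_distr_eq[OF m], measurable,
        subst integral_distr[OF m], measurable) (simp add: factor)
qed

lemma has_bochner_integral_affine_change:
  fixes f :: "'a::euclidean_space \<Rightarrow> real"
  assumes "s \<noteq> 0" and [measurable]: "f \<in> borel_measurable borel"
    and "has_bochner_integral lborel (\<lambda>x. \<bar>s\<bar> ^ DIM('a) * f (c + s *\<^sub>R x)) I"
  shows "has_bochner_integral lborel f I"
proof -
  have "has_bochner_integral (density (distr lborel borel (\<lambda>x. c + s *\<^sub>R x)) (\<lambda>_. \<bar>s\<bar> ^ DIM('a))) f I"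
    by (rule has_bochner_integral_density) (auto intro!: has_bochner_integral_distr simp: assms)
  then show ?thesis using lborel_affine[OF \<open>s \<noteq> 0\<close>, of c] by simp
qed

lemma has_bochner_integral_gaussian:
  fixes c :: "'a::euclidean_space"
  assumes "\<alpha> > 0"
  shows "has_bochner_integral lborel (\<lambda>x. exp (- \<alpha> * (norm (x - c))\<^sup>2)) ((pi / \<alpha>) powr (DIM('a) / 2))"
proof (rule has_bochner_integral_affine_change[where s="1 / sqrt \<alpha>" and c=c])
  let ?s = "1 / sqrt \<alpha>"
  have "sqrt pi ^ DIM('a) * \<bar>?s\<bar> ^ DIM('a) = sqrt (pi / \<alpha>) ^ DIM('a)"
    using assms by (simp add: real_sqrt_divide power_mult_distrib[symmetric])
  also have "\<dots> = (pi / \<alpha>) powr (DIM('a) / 2)"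
    using assms by (simp add: powr_half_sqrt[symmetric] powr_realpow[symmetric] powr_powr)
  finally have "(pi / \<alpha>) powr (DIM('a) / 2) = sqrt pi ^ DIM('a) * \<bar>?s\<bar> ^ DIM('a)" ..
  moreover have "exp (- \<alpha> * (norm (c + ?s *\<^sub>R x - c))\<^sup>2) = exp (- (norm x)\<^sup>2)" for x
    using assms by (simp add: power_mult_distrib power_divide)
  ultimately show "has_bochner_integral lborel (\<lambda>x. \<bar>?s\<bar> ^ DIM('a) * exp (- \<alpha> * (norm (c + ?s *\<^sub>R x - c))\<^sup>2))
      ((pi / \<alpha>) powr (DIM('a) / 2))"
    using has_bochner_integral_mult_right[OF has_bochner_integral_exp_neg_norm_sq, of "\<bar>?s\<bar> ^ DIM('a)"]
    by (simp add: mult.commute)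
qed (use assms in auto)

lemma integrable_gaussian:
  fixes c :: "'a::euclidean_space"
  shows "\<alpha> > 0 \<Longrightarrow> integrable lborel (\<lambda>x. exp (- \<alpha> * (norm (x - c))\<^sup>2))"
  using has_bochner_integral_gaussian by (auto simp: has_bochner_integral_iff)

lemma abs_mult_exp_neg_sq_le:
  fixes r :: real
  assumes "\<alpha> > 0"
  shows "\<bar>r\<bar> * exp (- \<alpha> * r\<^sup>2) \<le> exp (- \<alpha> * r\<^sup>2) + 2 / \<alpha> * exp (- (\<alpha> / 2) * r\<^sup>2)"
proof -
  have "0 \<le> (\<bar>r\<bar> - 1)\<^sup>2" by simp
  then have "\<bar>r\<bar> \<le> 1 + r\<^sup>2" by (simp add: power2_diff)
  then have "\<bar>r\<bar> * exp (- \<alpha> * r\<^sup>2) \<le> (1 + r\<^sup>2) * exp (- \<alpha> * r\<^sup>2)"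
    by (rule mult_right_mono) simp
  moreover have "(1 + r\<^sup>2) * exp (- \<alpha> * r\<^sup>2) = exp (- \<alpha> * r\<^sup>2) + r\<^sup>2 * exp (- \<alpha> * r\<^sup>2)"
    by (simp add: algebra_simps)
  moreover have "\<alpha> * r\<^sup>2 / 2 \<le> exp (\<alpha> * r\<^sup>2 / 2)"
    using exp_ge_add_one_self[of "\<alpha> * r\<^sup>2 / 2"] by linarith
  then have "r\<^sup>2 * exp (- \<alpha> * r\<^sup>2) \<le> 2 / \<alpha> * exp (\<alpha> * r\<^sup>2 / 2) * exp (- \<alpha> * r\<^sup>2)"
    using assms by (intro mult_right_mono) (simp_all add: field_simps)
  moreover have "2 / \<alpha> * exp (\<alpha> * r\<^sup>2 / 2) * exp (- \<alpha> * r\<^sup>2) = 2 / \<alpha> * exp (- (\<alpha> / 2) * r\<^sup>2)"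
    by (simp add: mult.assoc exp_add[symmetric])
  ultimately show ?thesis by linarith
qed

lemma integrable_norm_mult_gaussian:
  fixes c :: "'a::euclidean_space"
  assumes "\<alpha> > 0"
  shows "integrable lborel (\<lambda>x. norm (x - c) * exp (- \<alpha> * (norm (x - c))\<^sup>2))"
proof (rule Bochner_Integration.integrable_bound)
  show "integrable lborel (\<lambda>x. exp (- \<alpha> * (norm (x - c))\<^sup>2) + 2 / \<alpha> * exp (- (\<alpha> / 2) * (norm (x - c))\<^sup>2))"
    using integrable_gaussian[OF assms, of c] integrable_gaussian[of "\<alpha> / 2" c] assms by auto
  show "AE x in lborel. norm (norm (x - c) * exp (- \<alpha> * (norm (x - c))\<^sup>2))
      \<le> norm (exp (- \<alpha> * (norm (x - c))\<^sup>2) + 2 / \<alpha> * exp (- (\<alpha> / 2) * (norm (x - c))\<^sup>2))"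
  proof (rule AE_I2)
    fix x
    show "norm (norm (x - c) * exp (- \<alpha> * (norm (x - c))\<^sup>2))
      \<le> norm (exp (- \<alpha> * (norm (x - c))\<^sup>2) + 2 / \<alpha> * exp (- (\<alpha> / 2) * (norm (x - c))\<^sup>2))"
      using abs_mult_exp_neg_sq_le[OF assms, of "norm (x - c)"] assms by simp
  qed
qed measurable

lemma integrable_linear_gaussian:
  fixes a c :: "'a::euclidean_space"
  assumes "\<alpha> > 0"
  shows "integrable lborel (\<lambda>x. (a \<bullet> (x - c)) * exp (- \<alpha> * (norm (x - c))\<^sup>2))"
proof (rule Bochner_Integration.integrable_bound)
  show "integrable lborel (\<lambda>x. norm a * (norm (x - c) * exp (- \<alpha> * (norm (x - c))\<^sup>2)))"
    by (intro integrable_mult_right integrable_norm_mult_gaussian assms)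
  show "AE x in lborel. norm ((a \<bullet> (x - c)) * exp (- \<alpha> * (norm (x - c))\<^sup>2))
      \<le> norm (norm a * (norm (x - c) * exp (- \<alpha> * (norm (x - c))\<^sup>2)))"
    using Cauchy_Schwarz_ineq2[of a] by (auto intro!: AE_I2 mult_right_mono simp: abs_mult)
qed measurable

lemma has_bochner_integral_linear_gaussian:
  fixes a c :: "'a::euclidean_space"
  assumes "\<alpha> > 0"
  shows "has_bochner_integral lborel (\<lambda>x. (a \<bullet> (x - c)) * exp (- \<alpha> * (norm (x - c))\<^sup>2)) 0"
proof -
  define f where "f = (\<lambda>x. (a \<bullet> (x - c)) * exp (- \<alpha> * (norm (x - c))\<^sup>2))"
  define J where "J = integral\<^sup>L lborel f"
  have J: "has_bochner_integral lborel f J"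
    using integrable_linear_gaussian[OF assms, of a c] by (simp add: has_bochner_integral_iff J_def f_def)
  \<comment> \<open>the reflection \<open>x \<mapsto> 2 c - x\<close> changes the sign of \<open>f\<close>\<close>
  have "has_bochner_integral lborel f (- J)"
  proof (rule has_bochner_integral_affine_change[where s="-1" and c="2 *\<^sub>R c"])
    have "f (2 *\<^sub>R c + (-1) *\<^sub>R x) = - f x" for x
    proof -
      have e: "2 *\<^sub>R c + (-1) *\<^sub>R x - c = c - x" by (simp add: algebra_simps scaleR_2)
      have "a \<bullet> (c - x) = - (a \<bullet> (x - c))" by (simp add: inner_diff_right)
      then show ?thesis unfolding f_def e using norm_minus_commute[of c x] by simp
    qed
    then show "has_bochner_integral lborel (\<lambda>x. \<bar>-1::real\<bar> ^ DIM('a) * f (2 *\<^sub>R c + (-1) *\<^sub>R x)) (- J)"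
      using has_bochner_integral_minus[OF J] by simp
  qed (auto simp: f_def)
  with J have "J = - J" using has_bochner_integral_eq by blast
  with J show ?thesis by (simp add: f_def)
qed

lemma norm_sq_complete_square:
  fixes x y :: "'a::real_inner"
  assumes "\<alpha> + \<beta> \<noteq> 0"
  shows "\<alpha> * (norm (x - y))\<^sup>2 + \<beta> * (norm y)\<^sup>2 =
    (\<alpha> + \<beta>) * (norm (y - (\<alpha> / (\<alpha> + \<beta>)) *\<^sub>R x))\<^sup>2 + \<alpha> * \<beta> / (\<alpha> + \<beta>) * (norm x)\<^sup>2"
proof -
  define t where "t = \<alpha> / (\<alpha> + \<beta>)"
  have t: "t * (\<alpha> + \<beta>) = \<alpha>" "\<alpha> * \<beta> / (\<alpha> + \<beta>) = \<alpha> - \<alpha> * t"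
    using assms by (simp_all add: t_def field_simps)
  have "(\<alpha> + \<beta>) * (norm (y - t *\<^sub>R x))\<^sup>2 + (\<alpha> - \<alpha> * t) * (norm x)\<^sup>2
      = (\<alpha> + \<beta>) * (y \<bullet> y) - 2 * (t * (\<alpha> + \<beta>)) * (x \<bullet> y) + (t * (\<alpha> + \<beta>)) * t * (x \<bullet> x)
        + (\<alpha> - \<alpha> * t) * (x \<bullet> x)"
    by (simp add: power2_norm_eq_inner inner_diff_left inner_diff_right inner_commute algebra_simps)
  also have "\<dots> = \<alpha> * (norm (x - y))\<^sup>2 + \<beta> * (norm y)\<^sup>2"
    unfolding t(1)
    by (simp add: power2_norm_eq_inner inner_diff_left inner_diff_right inner_commute algebra_simps)
  finally show ?thesis unfolding t_def[symmetric] t(2) ..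
qed

lemma exp_gaussian_product:
  fixes x y :: "'a::real_inner"
  assumes "\<alpha> + \<beta> \<noteq> 0"
  shows "exp (- \<alpha> * (norm (x - y))\<^sup>2 - \<beta> * (norm y)\<^sup>2) =
    exp (- (\<alpha> + \<beta>) * (norm (y - (\<alpha> / (\<alpha> + \<beta>)) *\<^sub>R x))\<^sup>2) * exp (- (\<alpha> * \<beta> / (\<alpha> + \<beta>)) * (norm x)\<^sup>2)"
proof -
  have "- \<alpha> * (norm (x - y))\<^sup>2 - \<beta> * (norm y)\<^sup>2 =
      - (\<alpha> + \<beta>) * (norm (y - (\<alpha> / (\<alpha> + \<beta>)) *\<^sub>R x))\<^sup>2 + - (\<alpha> * \<beta> / (\<alpha> + \<beta>)) * (norm x)\<^sup>2"
    using norm_sq_complete_square[OF assms, of x y] by linarith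
  then show ?thesis by (simp only: exp_add)
qed

lemma has_bochner_integral_gaussian_product:
  fixes x :: "'a::euclidean_space"
  assumes "\<alpha> > 0" and "\<beta> > 0"
  shows "has_bochner_integral lborel (\<lambda>y. exp (- \<alpha> * (norm (x - y))\<^sup>2 - \<beta> * (norm y)\<^sup>2))
     ((pi / (\<alpha> + \<beta>)) powr (DIM('a) / 2) * exp (- (\<alpha> * \<beta> / (\<alpha> + \<beta>)) * (norm x)\<^sup>2))"
proof -
  have "\<alpha> + \<beta> \<noteq> 0" using assms by simp
  then show ?thesis
    unfolding exp_gaussian_product[OF \<open>\<alpha> + \<beta> \<noteq> 0\<close>] using assms
    by (intro has_bochner_integral_mult_left has_bochner_integral_gaussian) auto
qed

lemma has_bochner_integral_linear_gaussian_product: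
  fixes x a :: "'a::euclidean_space"
  assumes "\<alpha> > 0" and "\<beta> > 0"
  shows "has_bochner_integral lborel (\<lambda>y. (a \<bullet> y) * exp (- \<alpha> * (norm (x - y))\<^sup>2 - \<beta> * (norm y)\<^sup>2))
     (\<alpha> / (\<alpha> + \<beta>) * (a \<bullet> x) * (pi / (\<alpha> + \<beta>)) powr (DIM('a) / 2)
        * exp (- (\<alpha> * \<beta> / (\<alpha> + \<beta>)) * (norm x)\<^sup>2))"
proof -
  let ?c = "(\<alpha> / (\<alpha> + \<beta>)) *\<^sub>R x"
  let ?G = "\<lambda>y. exp (- (\<alpha> + \<beta>) * (norm (y - ?c))\<^sup>2)"
  let ?E = "exp (- (\<alpha> * \<beta> / (\<alpha> + \<beta>)) * (norm x)\<^sup>2)"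
  have "(a \<bullet> y) * exp (- \<alpha> * (norm (x - y))\<^sup>2 - \<beta> * (norm y)\<^sup>2) =
     ((a \<bullet> (y - ?c)) * ?G y + (a \<bullet> ?c) * ?G y) * ?E" for y
  proof -
    have "a \<bullet> y = a \<bullet> (y - ?c) + a \<bullet> ?c" by (simp add: inner_diff_right)
    then show ?thesis
      using exp_gaussian_product[of \<alpha> \<beta> x y] assms by (simp add: algebra_simps)
  qed
  moreover have "has_bochner_integral lborel (\<lambda>y. ((a \<bullet> (y - ?c)) * ?G y + (a \<bullet> ?c) * ?G y) * ?E)
     ((0 + (a \<bullet> ?c) * (pi / (\<alpha> + \<beta>)) powr (DIM('a) / 2)) * ?E)"
    using assms
    by (intro has_bochner_integral_mult_left has_bochner_integral_add has_bochner_integral_mult_right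
        has_bochner_integral_linear_gaussian has_bochner_integral_gaussian) auto
  ultimately show ?thesis by (simp add: mult_ac)
qed

section \<open>Integrals depending on a parameter\<close>

lemma DERIV_integral_dominated:
  fixes k k' :: "real \<Rightarrow> 'a \<Rightarrow> real"
  assumes [measurable]: "\<And>h. k h \<in> borel_measurable M" "\<And>h. k' h \<in> borel_measurable M"
    and w: "integrable M w" and k0: "integrable M (k 0)"
    and deriv: "\<And>h y. y \<in> space M \<Longrightarrow> DERIV (\<lambda>h. k h y) h :> k' h y"
    and bound: "\<And>h y. y \<in> space M \<Longrightarrow> \<bar>k' h y\<bar> \<le> w y"
  shows "DERIV (\<lambda>h. \<integral>y. k h y \<partial>M) 0 :> (\<integral>y. k' 0 y \<partial>M)"
proof -
  have lipschitz: "\<bar>k t y - k 0 y\<bar> \<le> w y * \<bar>t\<bar>" if "y \<in> space M" for t y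
    using field_differentiable_bound[of UNIV "\<lambda>h. k h y" "\<lambda>h. k' h y" "w y" t 0]
      deriv[OF that] bound[OF that] by simp
  have integrable: "integrable M (k t)" for t
  proof -
    have "integrable M (\<lambda>y. k 0 y + (k t y - k 0 y))"
    proof (rule Bochner_Integration.integrable_add[OF k0], rule Bochner_Integration.integrable_bound)
      show "integrable M (\<lambda>y. w y * \<bar>t\<bar>)" using w by simp
      show "AE y in M. norm (k t y - k 0 y) \<le> norm (w y * \<bar>t\<bar>)"
        using lipschitz by (auto intro!: AE_I2 order_trans[OF _ abs_ge_self])
    qed measurable
    then show ?thesis by simp
  qed
  show ?thesis unfolding DERIV_def
  proof (subst tendsto_at_iff_sequentially, intro allI impI)
    fix X :: "nat \<Rightarrow> real" assume X0: "\<forall>i. X i \<in> UNIV - {0}" and X: "X \<longlonglongrightarrow> 0"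
    have quotient: "((\<lambda>h. ((\<integral>y. k (0 + h) y \<partial>M) - (\<integral>y. k 0 y \<partial>M)) / h) \<circ> X) i
       = (\<integral>y. (k (X i) y - k 0 y) / X i \<partial>M)" for i
      using integrable by (simp add: Bochner_Integration.integral_diff)
    show "((\<lambda>h. ((\<integral>y. k (0 + h) y \<partial>M) - (\<integral>y. k 0 y \<partial>M)) / h) \<circ> X) \<longlonglongrightarrow> (\<integral>y. k' 0 y \<partial>M)"
      unfolding quotient
    proof (rule integral_dominated_convergence[where w=w])
      show "AE y in M. (\<lambda>i. (k (X i) y - k 0 y) / X i) \<longlonglongrightarrow> k' 0 y"
      proof (rule AE_I2)
        fix y assume "y \<in> space M"
        then have "((\<lambda>h. (k (0 + h) y - k 0 y) / h) \<longlongrightarrow> k' 0 y) (at 0)"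
          using deriv unfolding DERIV_def by blast
        then show "(\<lambda>i. (k (X i) y - k 0 y) / X i) \<longlonglongrightarrow> k' 0 y"
          using X0 X by (subst (asm) tendsto_at_iff_sequentially) (auto simp: comp_def)
      qed
      show "AE y in M. norm ((k (X i) y - k 0 y) / X i) \<le> w y" for i
        using lipschitz X0 by (auto intro!: AE_I2 simp: divide_simps abs_divide)
    qed (use w in auto)
  qed
qed

lemma continuous_on_set_integral_dominated:
  fixes f :: "'p::metric_space \<Rightarrow> 'a \<Rightarrow> real"
  assumes [measurable]: "A \<in> sets M" "\<And>x. f x \<in> borel_measurable M"
    and w: "set_integrable M A w"
    and bound: "\<And>x t. t \<in> A \<Longrightarrow> \<bar>f x t\<bar> \<le> w t"
    and cont: "\<And>t. t \<in> A \<Longrightarrow> continuous_on UNIV (\<lambda>x. f x t)"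
  shows "continuous_on UNIV (\<lambda>x. LINT t:A|M. f x t)"
  unfolding continuous_on_sequentially set_lebesgue_integral_def
proof (intro allI ballI impI, elim conjE)
  fix X :: "nat \<Rightarrow> 'p" and x0 assume "X \<longlonglongrightarrow> x0"
  then have "(\<lambda>i. f (X i) t) \<longlonglongrightarrow> f x0 t" if "t \<in> A" for t
    using cont[OF that] isCont_tendsto_compose by (fastforce simp: continuous_on_eq_continuous_at)
  then have "(\<lambda>i. indicator A t *\<^sub>R f (X i) t) \<longlonglongrightarrow> indicator A t *\<^sub>R f x0 t" for t
    by (cases "t \<in> A") auto
  moreover have "norm (indicator A t *\<^sub>R f x t) \<le> indicator A t *\<^sub>R w t" for x t
    using bound by (cases "t \<in> A") auto
  ultimately show "((\<lambda>x. \<integral>t. indicator A t *\<^sub>R f x t \<partial>M) \<circ> X) \<longlonglongrightarrow> (\<integral>t. indicator A t *\<^sub>R f x0 t \<partial>M)"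
    unfolding comp_def using w unfolding set_integrable_def
    by (intro integral_dominated_convergence[where w="\<lambda>t. indicator A t *\<^sub>R w t"]) auto
qed

lemma integrable_lborel_pair_dominated:
  fixes H :: "'a::euclidean_space \<Rightarrow> 'b::euclidean_space \<Rightarrow> real"
  assumes H[measurable]: "(\<lambda>(s, y). H s y) \<in> borel_measurable (lborel \<Otimes>\<^sub>M lborel)"
    and u: "integrable lborel u" and v: "integrable lborel v"
    and bound: "\<And>s y. \<bar>H s y\<bar> \<le> u s * v y"
  shows "integrable (lborel \<Otimes>\<^sub>M lborel) (\<lambda>(s, y). H s y)"
proof (rule lborel_pair.Fubini_integrable)
  have bound': "\<bar>H s y\<bar> \<le> \<bar>u s\<bar> * \<bar>v y\<bar>" for s y
    using bound[of s y] abs_ge_self[of "u s * v y"] by (simp add: abs_mult)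
  have H_s: "integrable lborel (H s)" for s
  proof (rule Bochner_Integration.integrable_bound)
    show "integrable lborel (\<lambda>y. \<bar>u s\<bar> * \<bar>v y\<bar>)" using v by simp
    show "H s \<in> borel_measurable lborel" using measurable_Pair2[OF H, of s] by simp
  qed (use bound' in \<open>auto intro!: AE_I2 simp: abs_mult\<close>)
  then show "AE s in lborel. integrable lborel (\<lambda>y. case (s, y) of (s, y) \<Rightarrow> H s y)"
    by simp
  show "integrable lborel (\<lambda>s. \<integral>y. norm (case (s, y) of (s, y) \<Rightarrow> H s y) \<partial>lborel)"
  proof (rule Bochner_Integration.integrable_bound)
    show "integrable lborel (\<lambda>s. \<bar>u s\<bar> * (\<integral>y. \<bar>v y\<bar> \<partial>lborel))"
      using u by (intro integrable_mult_left integrable_abs)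
    show "(\<lambda>s. \<integral>y. norm (case (s, y) of (s, y) \<Rightarrow> H s y) \<partial>lborel) \<in> borel_measurable lborel"
      by (rule lborel.borel_measurable_lebesgue_integral) measurable
    show "AE s in lborel. norm (\<integral>y. norm (case (s, y) of (s, y) \<Rightarrow> H s y) \<partial>lborel)
        \<le> norm (\<bar>u s\<bar> * (\<integral>y. \<bar>v y\<bar> \<partial>lborel))"
    proof (rule AE_I2)
      fix s
      have "(\<integral>y. \<bar>H s y\<bar> \<partial>lborel) \<le> (\<integral>y. \<bar>u s\<bar> * \<bar>v y\<bar> \<partial>lborel)"
        using bound' H_s v by (intro integral_mono) auto
      then show "norm (\<integral>y. norm (case (s, y) of (s, y) \<Rightarrow> H s y) \<partial>lborel)
          \<le> norm (\<bar>u s\<bar> * (\<integral>y. \<bar>v y\<bar> \<partial>lborel))"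
        by simp
    qed
  qed
qed (rule H)

section \<open>Integrals over the simplex\<close>

lemma set_integral_powr_Ioo:
  fixes a c :: real
  assumes "a > -1" and "c > 0"
  shows "set_integrable lborel {0<..<c} (\<lambda>x. x powr a)"
    and "(LINT x:{0<..<c}|lborel. x powr a) = c powr (a + 1) / (a + 1)"
proof -
  have hk: "((\<lambda>x. x powr a) has_integral (c powr (a + 1) / (a + 1))) {0<..<c}"
    using has_integral_powr_from_0[OF assms(1), of c] assms(2)
      has_integral_open_interval[of "\<lambda>x. x powr a" _ 0 c]
    by simp
  then have "(\<lambda>x. x powr a) absolutely_integrable_on {0<..<c}"
    by (intro nonnegative_absolutely_integrable_1) auto
  then have lebesgue: "set_integrable lebesgue {0<..<c} (\<lambda>x. x powr a)" .
  have [measurable]: "(\<lambda>x. indicator {0<..<c} x *\<^sub>R x powr a) \<in> borel_measurable lborel"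
    by measurable
  show "set_integrable lborel {0<..<c} (\<lambda>x. x powr a)"
    using lebesgue unfolding set_integrable_def by (simp add: integrable_completion)
  have "(LINT x:{0<..<c}|lebesgue. x powr a) = c powr (a + 1) / (a + 1)"
    using has_integral_set_lebesgue[OF lebesgue] hk has_integral_unique by blast
  then show "(LINT x:{0<..<c}|lborel. x powr a) = c powr (a + 1) / (a + 1)"
    unfolding set_lebesgue_integral_def by (simp add: integral_completion)
qed

lemma set_integrable_Ioo_powr_dominated:
  fixes f :: "real \<Rightarrow> real"
  assumes [measurable]: "f \<in> borel_measurable lborel"
    and "q < 1" and "c > 0"
    and bound: "\<And>t. 0 < t \<Longrightarrow> t < c \<Longrightarrow> \<bar>f t\<bar> \<le> C * t powr (- q)"
  shows "set_integrable lborel {0<..<c} f"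
    and "\<bar>LINT t:{0<..<c}|lborel. f t\<bar> \<le> C * c powr (1 - q) / (1 - q)"
proof -
  have powr: "set_integrable lborel {0<..<c} (\<lambda>t. C * t powr (- q))"
    using set_integral_powr_Ioo(1)[of "- q" c] assms by auto
  show f: "set_integrable lborel {0<..<c} f"
    by (rule set_integrable_bound[OF powr])
      (use bound in \<open>auto simp: set_borel_measurable_def intro!: AE_I2 order_trans[OF _ abs_ge_self]\<close>)
  have "\<bar>LINT t:{0<..<c}|lborel. f t\<bar> \<le> (LINT t:{0<..<c}|lborel. \<bar>f t\<bar>)"
    using set_integral_norm_bound[OF f] by simp
  also have "\<dots> \<le> (LINT t:{0<..<c}|lborel. C * t powr (- q))"
    using bound by (intro set_integral_mono set_integrable_abs f powr) auto
  also have "\<dots> = C * c powr (1 - q) / (1 - q)"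
    using set_integral_powr_Ioo(2)[of "- q" c] assms by simp
  finally show "\<bar>LINT t:{0<..<c}|lborel. f t\<bar> \<le> C * c powr (1 - q) / (1 - q)" .
qed

lemma set_integral_pos_Ioo:
  fixes f :: "real \<Rightarrow> real"
  assumes f: "set_integrable lborel {c<..<d} f" and "c < d"
    and pos: "\<And>x. x \<in> {c<..<d} \<Longrightarrow> f x > 0"
  shows "(LINT x:{c<..<d}|lborel. f x) > 0"
proof -
  let ?g = "\<lambda>x. indicator {c<..<d} x *\<^sub>R f x"
  have nonneg: "AE x in lborel. 0 \<le> ?g x"
    using pos by (auto intro!: AE_I2 simp: less_imp_le indicator_def)
  have "(LINT x:{c<..<d}|lborel. f x) \<noteq> 0"
  proof
    assume "(LINT x:{c<..<d}|lborel. f x) = 0"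
    then have "AE x in lborel. ?g x = 0"
      using integral_nonneg_eq_0_iff_AE[OF f[unfolded set_integrable_def] nonneg]
      unfolding set_lebesgue_integral_def by simp
    then have "AE x in lborel. x \<notin> {c<..<d}"
      by eventually_elim (use pos in \<open>fastforce simp: indicator_def split: if_splits\<close>)
    then have "{c<..<d} \<in> null_sets lborel" by (subst AE_iff_null_sets) auto
    then show False using \<open>c < d\<close> by (simp add: null_sets_def)
  qed
  moreover have "0 \<le> (LINT x:{c<..<d}|lborel. f x)"
    unfolding set_lebesgue_integral_def using nonneg by (rule integral_nonneg_AE)
  ultimately show ?thesis by simp
qed

lemma borel_measurable_fst_snd_lborel [measurable]:
  "fst \<in> borel_measurable (lborel \<Otimes>\<^sub>M (lborel :: real measure))"
  "snd \<in> borel_measurable ((lborel :: real measure) \<Otimes>\<^sub>M lborel)"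
  by (metis measurable_fst measurable_lborel1, metis measurable_snd measurable_lborel1)

lemma borel_measurable_indicator_Ioo_fst [measurable]:
  "(\<lambda>z::real \<times> real. indicator {0<..<fst z} (snd z) :: real) \<in> borel_measurable (lborel \<Otimes>\<^sub>M lborel)"
proof -
  have "(\<lambda>z::real \<times> real. indicator {0<..<fst z} (snd z) :: real) = (\<lambda>z. if 0 < snd z \<and> snd z < fst z then 1 else 0)"
    by (auto simp: indicator_def)
  also have "\<dots> \<in> borel_measurable (lborel \<Otimes>\<^sub>M lborel)" by measurable
  finally show ?thesis .
qed

lemma borel_measurable_simplex_slice_integral:
  fixes g :: "real \<Rightarrow> real \<Rightarrow> real"
  assumes [measurable]: "(\<lambda>(\<theta>, \<tau>). g \<theta> \<tau>) \<in> borel_measurable (lborel \<Otimes>\<^sub>M lborel)"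
  shows "(\<lambda>\<theta>. LINT \<tau>:{0<..<\<theta>}|lborel. g \<theta> \<tau>) \<in> borel_measurable lborel"
  unfolding set_lebesgue_integral_def
  by (rule lborel.borel_measurable_lebesgue_integral) measurable

lemma simplex_integral:
  fixes g :: "real \<Rightarrow> real \<Rightarrow> real"
  assumes g[measurable]: "(\<lambda>(\<theta>, \<tau>). g \<theta> \<tau>) \<in> borel_measurable (lborel \<Otimes>\<^sub>M lborel)"
    and q: "q < 1"
    and bound: "\<And>\<theta> \<tau>. 0 < \<tau> \<Longrightarrow> \<tau> < \<theta> \<Longrightarrow> \<theta> < 1 \<Longrightarrow> \<bar>g \<theta> \<tau>\<bar> \<le> C * \<theta> powr (- q) * \<tau> powr (- q)"
  shows "\<And>\<theta>. 0 < \<theta> \<Longrightarrow> \<theta> < 1 \<Longrightarrow> set_integrable lborel {0<..<\<theta>} (g \<theta>)"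
    and "set_integrable lborel {0<..<1} (\<lambda>\<theta>. LINT \<tau>:{0<..<\<theta>}|lborel. g \<theta> \<tau>)"
    and "\<bar>LINT \<theta>:{0<..<1}|lborel. LINT \<tau>:{0<..<\<theta>}|lborel. g \<theta> \<tau>\<bar> \<le> C / ((1 - q) * (2 - 2 * q))"
proof -
  have [measurable]: "g \<theta> \<in> borel_measurable lborel" for \<theta>
    using measurable_Pair2[OF g, of \<theta>] by simp
  note slice = set_integrable_Ioo_powr_dominated[where C="C * \<theta> powr (- q)" and c=\<theta> and f="g \<theta>" for \<theta>]
  show "set_integrable lborel {0<..<\<theta>} (g \<theta>)" if "0 < \<theta>" "\<theta> < 1" for \<theta>
    using slice(1)[of \<theta>] that q bound by auto
  \<comment> \<open>the slice integrals are dominated by \<open>\<theta> powr (1 - 2 * q)\<close>, i.e. again of the same type\<close>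
  have "\<bar>LINT \<tau>:{0<..<\<theta>}|lborel. g \<theta> \<tau>\<bar> \<le> C / (1 - q) * \<theta> powr (- (2 * q - 1))"
    if "0 < \<theta>" "\<theta> < 1" for \<theta>
  proof -
    have "\<bar>LINT \<tau>:{0<..<\<theta>}|lborel. g \<theta> \<tau>\<bar> \<le> C * \<theta> powr (- q) * \<theta> powr (1 - q) / (1 - q)"
      using slice(2)[of \<theta>] that q bound by auto
    also have "\<dots> = C / (1 - q) * \<theta> powr (- (2 * q - 1))"
      using that by (simp add: powr_add[symmetric])
    finally show ?thesis .
  qed
  note outer = set_integrable_Ioo_powr_dominated[OF borel_measurable_simplex_slice_integral[OF g],
      where q="2 * q - 1" and c=1 and C="C / (1 - q)", OF _ _ this]
  show "set_integrable lborel {0<..<1} (\<lambda>\<theta>. LINT \<tau>:{0<..<\<theta>}|lborel. g \<theta> \<tau>)"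
    using outer(1) q by simp
  show "\<bar>LINT \<theta>:{0<..<1}|lborel. LINT \<tau>:{0<..<\<theta>}|lborel. g \<theta> \<tau>\<bar> \<le> C / ((1 - q) * (2 - 2 * q))"
    using outer(2) q by simp
qed

lemma continuous_on_simplex_integral:
  fixes f :: "real \<Rightarrow> real \<Rightarrow> 'a::metric_space \<Rightarrow> real"
  assumes f[measurable]: "\<And>x. (\<lambda>(\<theta>, \<tau>). f \<theta> \<tau> x) \<in> borel_measurable (lborel \<Otimes>\<^sub>M lborel)"
    and q: "q < 1"
    and bound: "\<And>\<theta> \<tau> x. 0 < \<tau> \<Longrightarrow> \<tau> < \<theta> \<Longrightarrow> \<theta> < 1 \<Longrightarrow> \<bar>f \<theta> \<tau> x\<bar> \<le> C * \<theta> powr (- q) * \<tau> powr (- q)"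
    and cont: "\<And>\<theta> \<tau>. 0 < \<tau> \<Longrightarrow> \<tau> < \<theta> \<Longrightarrow> \<theta> < 1 \<Longrightarrow> continuous_on UNIV (f \<theta> \<tau>)"
  shows "continuous_on UNIV (\<lambda>x. LINT \<theta>:{0<..<1}|lborel. LINT \<tau>:{0<..<\<theta>}|lborel. f \<theta> \<tau> x)"
proof (rule continuous_on_set_integral_dominated)
  show "(\<lambda>\<theta>. LINT \<tau>:{0<..<\<theta>}|lborel. f \<theta> \<tau> x) \<in> borel_measurable lborel" for x
    by (rule borel_measurable_simplex_slice_integral) measurable
  show "set_integrable lborel {0<..<1} (\<lambda>\<theta>. C / (1 - q) * \<theta> powr (1 - 2 * q))"
    using set_integral_powr_Ioo(1)[of "1 - 2 * q" 1] q by simp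
  show "\<bar>LINT \<tau>:{0<..<\<theta>}|lborel. f \<theta> \<tau> x\<bar> \<le> C / (1 - q) * \<theta> powr (1 - 2 * q)"
    if "\<theta> \<in> {0<..<1}" for x \<theta>
  proof -
    have "(\<lambda>\<tau>. f \<theta> \<tau> x) \<in> borel_measurable lborel"
      using measurable_Pair2[OF f[of x], of \<theta>] by simp
    then have "\<bar>LINT \<tau>:{0<..<\<theta>}|lborel. f \<theta> \<tau> x\<bar> \<le> C * \<theta> powr (- q) * \<theta> powr (1 - q) / (1 - q)"
      using set_integrable_Ioo_powr_dominated(2)[where C="C * \<theta> powr (- q)" and c=\<theta>] that q bound
      by auto
    also have "\<dots> = C / (1 - q) * \<theta> powr (1 - 2 * q)"
      using that by (simp add: powr_add[symmetric])
    finally show ?thesis .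
  qed
  show "continuous_on UNIV (\<lambda>x. LINT \<tau>:{0<..<\<theta>}|lborel. f \<theta> \<tau> x)" if "\<theta> \<in> {0<..<1}" for \<theta>
  proof (rule continuous_on_set_integral_dominated)
    show "(\<lambda>\<tau>. f \<theta> \<tau> x) \<in> borel_measurable lborel" for x
      using measurable_Pair2[OF f[of x], of \<theta>] by simp
    show "set_integrable lborel {0<..<\<theta>} (\<lambda>\<tau>. C * \<theta> powr (- q) * \<tau> powr (- q))"
      using set_integral_powr_Ioo(1)[of "- q" \<theta>] that q by simp
  qed (use that bound cont in auto)
qed simp

lemma simplex_integral_pos:
  fixes g :: "real \<Rightarrow> real \<Rightarrow> real"
  assumes g: "(\<lambda>(\<theta>, \<tau>). g \<theta> \<tau>) \<in> borel_measurable (lborel \<Otimes>\<^sub>M lborel)"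
    and q: "q < 1"
    and bound: "\<And>\<theta> \<tau>. 0 < \<tau> \<Longrightarrow> \<tau> < \<theta> \<Longrightarrow> \<theta> < 1 \<Longrightarrow> \<bar>g \<theta> \<tau>\<bar> \<le> C * \<theta> powr (- q) * \<tau> powr (- q)"
    and pos: "\<And>\<theta> \<tau>. 0 < \<tau> \<Longrightarrow> \<tau> < \<theta> \<Longrightarrow> \<theta> < 1 \<Longrightarrow> 0 < g \<theta> \<tau>"
  shows "0 < (LINT \<theta>:{0<..<1}|lborel. LINT \<tau>:{0<..<\<theta>}|lborel. g \<theta> \<tau>)"
  using simplex_integral[OF g q bound] pos
  by (intro set_integral_pos_Ioo) auto

section \<open>Heat flow of Gaussians\<close>

lemma heat_kernel_eq_exp:
  "heat_kernel t (z::real^'n) =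
    (4 * pi * t) powr (- (real CARD('n) / 2)) * exp (- (1 / (4 * t)) * (norm z)\<^sup>2)"
  unfolding heat_kernel_def by simp

lemma heat_kernel_powr:
  assumes "s > 0"
  shows "heat_kernel s (z::real^'n) powr r =
    (4 * pi * s) powr (- (real CARD('n) / 2) * r) * exp (- (r / (4 * s)) * (norm z)\<^sup>2)"
  unfolding heat_kernel_def using assms
  by (simp add: powr_mult powr_powr exp_powr_real)

lemma heat_kernel_nonneg: "0 \<le> heat_kernel t z"
  unfolding heat_kernel_def by simp

lemma borel_measurable_heat_kernel [measurable]: "heat_kernel t \<in> borel_measurable borel"
  unfolding heat_kernel_def[abs_def] by measurable

lemma heat_kernel_le:
  "t > 0 \<Longrightarrow> heat_kernel t (z::real^'n) \<le> (4 * pi * t) powr (- (real CARD('n) / 2))"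
  unfolding heat_kernel_eq_exp by (rule mult_left_le) simp_all

lemma heat_kernel_normalisation:
  fixes N t \<gamma> :: real
  assumes "t > 0" and "\<gamma> > 0"
  shows "(4 * pi * t) powr (- N / 2) * (pi / \<gamma>) powr (N / 2) = (4 * t * \<gamma>) powr (- N / 2)"
proof -
  have "(pi / \<gamma>) powr (N / 2) = ((4 * pi * t) / (4 * t * \<gamma>)) powr (N / 2)"
    using assms by simp
  also have "\<dots> = (4 * pi * t) powr (N / 2) / (4 * t * \<gamma>) powr (N / 2)"
    using assms by (intro powr_divide)
  finally have "(4 * pi * t) powr (- N / 2) * (pi / \<gamma>) powr (N / 2)
      = ((4 * pi * t) powr (- N / 2) * (4 * pi * t) powr (N / 2)) / (4 * t * \<gamma>) powr (N / 2)"
    by simp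
  also have "(4 * pi * t) powr (- N / 2) * (4 * pi * t) powr (N / 2) = 1"
    using assms by (simp add: powr_add[symmetric])
  finally show ?thesis
    by (simp add: powr_minus_divide)
qed

lemma heat_sg_cmult: "heat_sg t (\<lambda>y. c * \<phi> y) x = c * heat_sg t \<phi> x"
  unfolding heat_sg_def by (simp add: mult.left_commute)

lemma heat_sg_gaussian:
  fixes x :: "real^'n"
  assumes t: "t > 0" and \<beta>: "\<beta> > 0"
  defines "N \<equiv> real CARD('n)"
  shows "heat_sg t (\<lambda>y. exp (- \<beta> * (norm y)\<^sup>2)) x =
    (1 + 4 * t * \<beta>) powr (- N / 2) * exp (- (\<beta> / (1 + 4 * t * \<beta>)) * (norm x)\<^sup>2)"
proof -
  define \<alpha> where "\<alpha> = 1 / (4 * t)"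
  define c where "c = (4 * pi * t) powr (- N / 2)"
  have \<alpha>: "\<alpha> > 0" using t by (simp add: \<alpha>_def)
  have rates: "4 * t * (\<alpha> + \<beta>) = 1 + 4 * t * \<beta>" "\<alpha> * \<beta> / (\<alpha> + \<beta>) = \<beta> / (1 + 4 * t * \<beta>)"
    using t \<beta> by (simp_all add: \<alpha>_def field_simps)
  have integrand: "heat_kernel t (x - y) * exp (- \<beta> * (norm y)\<^sup>2) =
      c * exp (- \<alpha> * (norm (x - y))\<^sup>2 - \<beta> * (norm y)\<^sup>2)" for y
    unfolding heat_kernel_eq_exp c_def \<alpha>_def N_def by (simp add: exp_add[symmetric] mult_ac)
  have "c * (pi / (\<alpha> + \<beta>)) powr (N / 2) = (1 + 4 * t * \<beta>) powr (- N / 2)"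
    unfolding c_def rates(1)[symmetric] using t \<alpha> \<beta> by (intro heat_kernel_normalisation) auto
  moreover have "has_bochner_integral lborel (\<lambda>y. c * exp (- \<alpha> * (norm (x - y))\<^sup>2 - \<beta> * (norm y)\<^sup>2))
      (c * ((pi / (\<alpha> + \<beta>)) powr (N / 2) * exp (- (\<alpha> * \<beta> / (\<alpha> + \<beta>)) * (norm x)\<^sup>2)))"
    using has_bochner_integral_gaussian_product[OF \<alpha> \<beta>, of x] unfolding N_def
    by (intro has_bochner_integral_mult_right) simp
  ultimately show ?thesis
    unfolding heat_sg_def integrand has_bochner_integral_iff rates(2) by (simp add: mult.assoc[symmetric])
qed

lemma heat_sg_linear_gaussian:
  fixes a x :: "real^'n"
  assumes t: "t > 0" and \<beta>: "\<beta> > 0"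
  defines "N \<equiv> real CARD('n)"
  shows "heat_sg t (\<lambda>y. (a \<bullet> y) * exp (- \<beta> * (norm y)\<^sup>2)) x =
    (1 + 4 * t * \<beta>) powr (- N / 2 - 1) * ((a \<bullet> x) * exp (- (\<beta> / (1 + 4 * t * \<beta>)) * (norm x)\<^sup>2))"
proof -
  define \<alpha> where "\<alpha> = 1 / (4 * t)"
  define c where "c = (4 * pi * t) powr (- N / 2)"
  define v where "v = 1 + 4 * t * \<beta>"
  have \<alpha>: "\<alpha> > 0" using t by (simp add: \<alpha>_def)
  have "4 * t * \<beta> > 0" using t \<beta> by simp
  then have v: "v > 0" unfolding v_def by linarith
  have rates: "4 * t * (\<alpha> + \<beta>) = v" "\<alpha> / (\<alpha> + \<beta>) = 1 / v" "\<alpha> * \<beta> / (\<alpha> + \<beta>) = \<beta> / v"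
    using t v by (simp_all add: \<alpha>_def v_def field_simps)
  have integrand: "heat_kernel t (x - y) * ((a \<bullet> y) * exp (- \<beta> * (norm y)\<^sup>2)) =
      c * ((a \<bullet> y) * exp (- \<alpha> * (norm (x - y))\<^sup>2 - \<beta> * (norm y)\<^sup>2))" for y
    unfolding heat_kernel_eq_exp c_def \<alpha>_def N_def by (simp add: exp_add[symmetric] mult_ac)
  have "c * (pi / (\<alpha> + \<beta>)) powr (N / 2) = v powr (- N / 2)"
    unfolding c_def rates(1)[symmetric] using t \<alpha> \<beta> by (intro heat_kernel_normalisation) auto
  then have amplitude: "c * (\<alpha> / (\<alpha> + \<beta>) * (pi / (\<alpha> + \<beta>)) powr (N / 2)) = v powr (- N / 2 - 1)"
    unfolding rates(2) using v by (simp add: powr_diff mult_ac)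
  have "has_bochner_integral lborel (\<lambda>y. c * ((a \<bullet> y) * exp (- \<alpha> * (norm (x - y))\<^sup>2 - \<beta> * (norm y)\<^sup>2)))
      (c * (\<alpha> / (\<alpha> + \<beta>) * (a \<bullet> x) * (pi / (\<alpha> + \<beta>)) powr (N / 2)
        * exp (- (\<alpha> * \<beta> / (\<alpha> + \<beta>)) * (norm x)\<^sup>2)))"
    using has_bochner_integral_linear_gaussian_product[OF \<alpha> \<beta>, of a x] unfolding N_def
    by (intro has_bochner_integral_mult_right) simp
  then show ?thesis
    unfolding heat_sg_def integrand has_bochner_integral_iff rates(3) v_def[symmetric] amplitude[symmetric]
    by (simp add: mult_ac)
qed

lemma heat_sg_set_integral:
  fixes F :: "real \<Rightarrow> real^'n \<Rightarrow> real"
  assumes t: "t > 0" and [measurable]: "S \<in> sets lborel"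
    and F[measurable]: "(\<lambda>(s, y). F s y) \<in> borel_measurable (lborel \<Otimes>\<^sub>M lborel)"
    and w: "set_integrable lborel S w" and h: "integrable lborel h"
    and bound: "\<And>s y. s \<in> S \<Longrightarrow> \<bar>F s y\<bar> \<le> w s * h y"
  shows "heat_sg t (\<lambda>y. LINT s:S|lborel. F s y) x = (LINT s:S|lborel. heat_sg t (F s) x)"
proof -
  define H where "H s y = indicator S s * (heat_kernel t (x - y) * F s y)" for s y
  define c where "c = (4 * pi * t) powr (- (real CARD('n) / 2))"
  have "integrable (lborel \<Otimes>\<^sub>M lborel) (\<lambda>(s, y). H s y)"
  proof (rule integrable_lborel_pair_dominated)
    have "(\<lambda>(s, y). H s y) = (\<lambda>z. indicator S (fst z) * (heat_kernel t (x - snd z) * (\<lambda>(s, y). F s y) z))"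
      by (auto simp: H_def)
    also have "\<dots> \<in> borel_measurable (lborel \<Otimes>\<^sub>M lborel)" by measurable
    finally show "(\<lambda>(s, y). H s y) \<in> borel_measurable (lborel \<Otimes>\<^sub>M lborel)" .
    show "integrable lborel (\<lambda>s. c * \<bar>indicator S s * w s\<bar>)"
      using w unfolding set_integrable_def real_scaleR_def by (intro integrable_mult_right integrable_abs)
    show "integrable lborel (\<lambda>y. \<bar>h y\<bar>)" using h by (rule integrable_abs)
    show "\<bar>H s y\<bar> \<le> c * \<bar>indicator S s * w s\<bar> * \<bar>h y\<bar>" for s y
    proof (cases "s \<in> S")
      case True
      have "\<bar>H s y\<bar> = heat_kernel t (x - y) * \<bar>F s y\<bar>"
        using True heat_kernel_nonneg[of t "x - y"] by (simp add: H_def abs_mult)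
      also have "\<dots> \<le> c * \<bar>w s * h y\<bar>"
        using bound[OF True, of y] heat_kernel_le[OF t, of "x - y"] heat_kernel_nonneg
        by (intro mult_mono) (auto simp: c_def)
      finally show ?thesis using True by (simp add: abs_mult mult.assoc)
    qed (simp add: H_def)
  qed
  then have Fubini: "(\<integral>y. (\<integral>s. H s y \<partial>lborel) \<partial>lborel) = (\<integral>s. (\<integral>y. H s y \<partial>lborel) \<partial>lborel)"
    by (rule lborel_pair.Fubini_integral)
  have "heat_kernel t (x - y) * (LINT s:S|lborel. F s y) = (\<integral>s. H s y \<partial>lborel)" for y
    unfolding set_lebesgue_integral_def H_def integral_mult_right_zero[symmetric]
    by (simp add: mult.left_commute)
  moreover have "(LINT s:S|lborel. heat_sg t (F s) x) = (\<integral>s. (\<integral>y. H s y \<partial>lborel) \<partial>lborel)"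
    unfolding set_lebesgue_integral_def H_def heat_sg_def integral_mult_right_zero[symmetric] by simp
  ultimately show ?thesis
    unfolding heat_sg_def Fubini[symmetric] by simp
qed

lemma heat_sg_set_integral_linear_gaussian:
  fixes a x :: "real^'n" and w g :: "real \<Rightarrow> real"
  assumes t: "t > 0" and S[measurable]: "S \<in> sets lborel"
    and [measurable]: "w \<in> borel_measurable lborel" "g \<in> borel_measurable lborel"
    and w: "set_integrable lborel S w"
    and b: "b > 0" and g: "\<And>\<tau>. \<tau> \<in> S \<Longrightarrow> b \<le> g \<tau>"
  defines "N \<equiv> real CARD('n)"
  shows "heat_sg t (\<lambda>y. LINT \<tau>:S|lborel. w \<tau> * ((a \<bullet> y) * exp (- g \<tau> * (norm y)\<^sup>2))) x
    = (LINT \<tau>:S|lborel. w \<tau> * ((1 + 4 * t * g \<tau>) powr (- N / 2 - 1)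
        * ((a \<bullet> x) * exp (- (g \<tau> / (1 + 4 * t * g \<tau>)) * (norm x)\<^sup>2))))"
proof -
  have "heat_sg t (\<lambda>y. LINT \<tau>:S|lborel. w \<tau> * ((a \<bullet> y) * exp (- g \<tau> * (norm y)\<^sup>2))) x
    = (LINT \<tau>:S|lborel. heat_sg t (\<lambda>y. w \<tau> * ((a \<bullet> y) * exp (- g \<tau> * (norm y)\<^sup>2))) x)"
  proof (rule heat_sg_set_integral[OF t _ _ set_integrable_abs[OF w]])
    show "integrable lborel (\<lambda>y. norm a * (norm (y - 0) * exp (- b * (norm (y - 0))\<^sup>2)))"
      using b by (intro integrable_mult_right integrable_norm_mult_gaussian)
    show "\<bar>w \<tau> * ((a \<bullet> y) * exp (- g \<tau> * (norm y)\<^sup>2))\<bar>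
        \<le> \<bar>w \<tau>\<bar> * (norm a * (norm (y - 0) * exp (- b * (norm (y - 0))\<^sup>2)))" if "\<tau> \<in> S" for \<tau> y
    proof -
      have "exp (- g \<tau> * (norm y)\<^sup>2) \<le> exp (- b * (norm y)\<^sup>2)"
        using g[OF that] by (simp add: mult_right_mono)
      then have "\<bar>a \<bullet> y\<bar> * exp (- g \<tau> * (norm y)\<^sup>2) \<le> norm a * norm y * exp (- b * (norm y)\<^sup>2)"
        using Cauchy_Schwarz_ineq2[of a y] by (intro mult_mono) auto
      then have "\<bar>w \<tau>\<bar> * (\<bar>a \<bullet> y\<bar> * exp (- g \<tau> * (norm y)\<^sup>2))
          \<le> \<bar>w \<tau>\<bar> * (norm a * norm y * exp (- b * (norm y)\<^sup>2))"
        by (rule mult_left_mono) simp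
      then show ?thesis by (simp add: abs_mult mult.assoc)
    qed
  qed measurable
  also have "\<dots> = (LINT \<tau>:S|lborel. w \<tau> * ((1 + 4 * t * g \<tau>) powr (- N / 2 - 1)
        * ((a \<bullet> x) * exp (- (g \<tau> / (1 + 4 * t * g \<tau>)) * (norm x)\<^sup>2))))"
  proof (rule set_lebesgue_integral_cong[OF S], intro allI impI)
    fix \<tau> assume "\<tau> \<in> S"
    then have "0 < g \<tau>" using b g by (meson less_le_trans)
    then show "heat_sg t (\<lambda>y. w \<tau> * ((a \<bullet> y) * exp (- g \<tau> * (norm y)\<^sup>2))) x
      = w \<tau> * ((1 + 4 * t * g \<tau>) powr (- N / 2 - 1) * ((a \<bullet> x) * exp (- (g \<tau> / (1 + 4 * t * g \<tau>)) * (norm x)\<^sup>2)))"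
      by (simp only: heat_sg_cmult heat_sg_linear_gaussian[OF t] N_def)
  qed
  finally show ?thesis .
qed

section \<open>Directional derivatives of Gaussian families\<close>

lemma DERIV_norm_sq_line:
  fixes x a :: "'a::real_inner"
  shows "DERIV (\<lambda>h. (norm (x + h *\<^sub>R a))\<^sup>2) h :> 2 * (a \<bullet> (x + h *\<^sub>R a))"
proof -
  have "(norm (x + h *\<^sub>R a))\<^sup>2 = x \<bullet> x + 2 * h * (a \<bullet> x) + h\<^sup>2 * (a \<bullet> a)" for h
    unfolding power2_norm_eq_inner
    by (simp add: inner_add_left inner_add_right inner_commute algebra_simps power2_eq_square)
  then show ?thesis
    by (auto intro!: derivative_eq_intros simp: inner_add_right algebra_simps)
qed

lemma DERIV_linear_gaussian_line:
  fixes x a :: "'a::real_inner"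
  shows "DERIV (\<lambda>h. (a \<bullet> (x + h *\<^sub>R a)) * exp (- g * (norm (x + h *\<^sub>R a))\<^sup>2)) h :>
     ((a \<bullet> a) - 2 * g * (a \<bullet> (x + h *\<^sub>R a))\<^sup>2) * exp (- g * (norm (x + h *\<^sub>R a))\<^sup>2)"
proof -
  have "DERIV (\<lambda>h. a \<bullet> (x + h *\<^sub>R a)) h :> a \<bullet> a"
    unfolding inner_add_right inner_scaleR_right by (auto intro!: derivative_eq_intros)
  from DERIV_mult[OF this DERIV_chain2[OF DERIV_exp DERIV_cmult[OF DERIV_norm_sq_line]]]
  show ?thesis
    by (rule DERIV_cong) (simp add: algebra_simps power2_eq_square)
qed

lemma dir_deriv_gaussian:
  fixes a y :: "real^'n"
  shows "dir_deriv a (\<lambda>y. C * exp (- g * (norm y)\<^sup>2)) y = - (a \<bullet> y) * (2 * g * C * exp (- g * (norm y)\<^sup>2))"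
  unfolding dir_deriv_def
  by (rule DERIV_imp_deriv, rule DERIV_cong[OF DERIV_cmult[OF DERIV_chain2[OF DERIV_exp
        DERIV_cmult[OF DERIV_norm_sq_line]]]]) simp

lemma abs_linear_gaussian_deriv_le:
  fixes a z :: "'a::real_inner"
  assumes d: "d \<ge> 0" and E: "E \<ge> 0"
  shows "\<bar>- E * ((a \<bullet> a) - 2 * d * (a \<bullet> z)\<^sup>2) * exp (- d * (norm z)\<^sup>2)\<bar> \<le> 3 * (a \<bullet> a) * E"
proof -
  have "\<bar>a \<bullet> z\<bar>\<^sup>2 \<le> (norm a * norm z)\<^sup>2"
    using Cauchy_Schwarz_ineq2[of a z] by (intro power_mono) auto
  then have cs: "(a \<bullet> z)\<^sup>2 \<le> (a \<bullet> a) * (norm z)\<^sup>2"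
    by (simp add: power_mult_distrib power2_norm_eq_inner)
  have "\<bar>(a \<bullet> a) - 2 * d * (a \<bullet> z)\<^sup>2\<bar> \<le> (a \<bullet> a) + 2 * d * (a \<bullet> z)\<^sup>2"
    using d by (simp add: abs_le_iff)
  also have "\<dots> \<le> (a \<bullet> a) + 2 * d * ((a \<bullet> a) * (norm z)\<^sup>2)"
    using cs d by (intro add_left_mono mult_left_mono) auto
  finally have "\<bar>(a \<bullet> a) - 2 * d * (a \<bullet> z)\<^sup>2\<bar> * exp (- d * (norm z)\<^sup>2)
      \<le> (a \<bullet> a) * exp (- d * (norm z)\<^sup>2) + 2 * (a \<bullet> a) * ((d * (norm z)\<^sup>2) * exp (- (d * (norm z)\<^sup>2)))"
    by (rule mult_right_mono[THEN order_trans]) (simp_all add: algebra_simps)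
  also have "\<dots> \<le> (a \<bullet> a) * 1 + 2 * (a \<bullet> a) * 1"
  proof (intro add_mono mult_left_mono)
    show "exp (- d * (norm z)\<^sup>2) \<le> 1" using d by simp
    have "d * (norm z)\<^sup>2 \<le> exp (d * (norm z)\<^sup>2)"
      using exp_ge_add_one_self[of "d * (norm z)\<^sup>2"] by linarith
    then have "d * (norm z)\<^sup>2 * exp (- (d * (norm z)\<^sup>2))
        \<le> exp (d * (norm z)\<^sup>2) * exp (- (d * (norm z)\<^sup>2))"
      by (rule mult_right_mono) simp
    then show "d * (norm z)\<^sup>2 * exp (- (d * (norm z)\<^sup>2)) \<le> 1"
      by (simp add: exp_minus)
  qed simp_all
  finally have "\<bar>(a \<bullet> a) - 2 * d * (a \<bullet> z)\<^sup>2\<bar> * exp (- d * (norm z)\<^sup>2) \<le> 3 * (a \<bullet> a)"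
    by simp
  then have "E * (\<bar>(a \<bullet> a) - 2 * d * (a \<bullet> z)\<^sup>2\<bar> * exp (- d * (norm z)\<^sup>2)) \<le> E * (3 * (a \<bullet> a))"
    using E by (rule mult_left_mono)
  then show ?thesis
    using E by (simp add: abs_mult mult_ac)
qed

lemma set_integrable_linear_gaussian_family:
  fixes a x :: "real^'n" and E d :: "real \<Rightarrow> real"
  assumes [measurable]: "S \<in> sets lborel" "E \<in> borel_measurable lborel" "d \<in> borel_measurable lborel"
    and E: "set_integrable lborel S E"
    and nonneg: "\<And>t. t \<in> S \<Longrightarrow> 0 \<le> E t" "\<And>t. t \<in> S \<Longrightarrow> 0 \<le> d t"
  shows "set_integrable lborel S (\<lambda>t. - (a \<bullet> x) * E t * exp (- d t * (norm x)\<^sup>2))"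
proof (rule set_integrable_bound[OF set_integrable_mult_right[OF E, of "\<bar>a \<bullet> x\<bar>"]])
  show "set_borel_measurable lborel S (\<lambda>t. - (a \<bullet> x) * E t * exp (- d t * (norm x)\<^sup>2))"
    unfolding set_borel_measurable_def by measurable
  have "\<bar>a \<bullet> x\<bar> * E t * exp (- d t * (norm x)\<^sup>2) \<le> \<bar>a \<bullet> x\<bar> * E t * 1" if "t \<in> S" for t
    using nonneg[OF that] by (intro mult_left_mono) auto
  then show "AE t in lborel. t \<in> S \<longrightarrow>
      norm (- (a \<bullet> x) * E t * exp (- d t * (norm x)\<^sup>2)) \<le> norm (\<bar>a \<bullet> x\<bar> * E t)"
    using nonneg by (intro AE_I2) (simp add: abs_mult)
qed

lemma dir_deriv_set_integral_linear_gaussian: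
  fixes a x :: "real^'n" and E d :: "real \<Rightarrow> real"
  assumes [measurable]: "S \<in> sets lborel" "E \<in> borel_measurable lborel" "d \<in> borel_measurable lborel"
    and E: "set_integrable lborel S E"
    and nonneg: "\<And>t. t \<in> S \<Longrightarrow> 0 \<le> E t" "\<And>t. t \<in> S \<Longrightarrow> 0 \<le> d t"
  shows "dir_deriv a (\<lambda>x. LINT t:S|lborel. - (a \<bullet> x) * E t * exp (- d t * (norm x)\<^sup>2)) x =
    (LINT t:S|lborel. - E t * ((a \<bullet> a) - 2 * d t * (a \<bullet> x)\<^sup>2) * exp (- d t * (norm x)\<^sup>2))"
proof -
  define k where "k h t = indicator S t *\<^sub>R
      (- (a \<bullet> (x + h *\<^sub>R a)) * E t * exp (- d t * (norm (x + h *\<^sub>R a))\<^sup>2))" for h t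
  define k' where "k' h t = indicator S t *\<^sub>R
      (- E t * ((a \<bullet> a) - 2 * d t * (a \<bullet> (x + h *\<^sub>R a))\<^sup>2) * exp (- d t * (norm (x + h *\<^sub>R a))\<^sup>2))" for h t
  have E': "integrable lborel (\<lambda>t. indicator S t *\<^sub>R E t)"
    using E unfolding set_integrable_def .
  have "DERIV (\<lambda>h. \<integral>t. k h t \<partial>lborel) 0 :> (\<integral>t. k' 0 t \<partial>lborel)"
  proof (rule DERIV_integral_dominated[where w="\<lambda>t. 3 * (a \<bullet> a) * (indicator S t *\<^sub>R E t)"])
    show "k h \<in> borel_measurable lborel" for h unfolding k_def by measurable
    show "k' h \<in> borel_measurable lborel" for h unfolding k'_def by measurable
    show "integrable lborel (\<lambda>t. 3 * (a \<bullet> a) * (indicator S t *\<^sub>R E t))"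
      using E' by (rule integrable_mult_right)
    show "integrable lborel (k 0)"
      using set_integrable_linear_gaussian_family[OF assms] unfolding k_def set_integrable_def by simp
    show "DERIV (\<lambda>h. k h t) h :> k' h t" for h t
    proof -
      have "DERIV (\<lambda>h. (- (indicator S t * E t)) * ((a \<bullet> (x + h *\<^sub>R a)) * exp (- d t * (norm (x + h *\<^sub>R a))\<^sup>2))) h :>
          (- (indicator S t * E t)) * (((a \<bullet> a) - 2 * d t * (a \<bullet> (x + h *\<^sub>R a))\<^sup>2) * exp (- d t * (norm (x + h *\<^sub>R a))\<^sup>2))"
        by (rule DERIV_cmult[OF DERIV_linear_gaussian_line])
      then show ?thesis unfolding k_def k'_def by (simp add: mult_ac)
    qed
    show "\<bar>k' h t\<bar> \<le> 3 * (a \<bullet> a) * (indicator S t *\<^sub>R E t)" for h t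
    proof (cases "t \<in> S")
      case True
      then show ?thesis
        using abs_linear_gaussian_deriv_le[of "d t" "E t" a "x + h *\<^sub>R a"] nonneg[OF True]
        unfolding k'_def by simp
    qed (simp add: k'_def)
  qed
  then have "deriv (\<lambda>h. \<integral>t. k h t \<partial>lborel) 0 = (\<integral>t. k' 0 t \<partial>lborel)"
    by (rule DERIV_imp_deriv)
  then show ?thesis
    unfolding dir_deriv_def set_lebesgue_integral_def k_def k'_def by simp
qed

section \<open>The explicit kernel of S02\<close>

text \<open>
  Here \<open>N = n\<close>. For \<open>0 < \<tau> < \<theta>\<close> one has \<open>e\<^bsup>(\<theta>-\<tau>)\<Delta>\<^esup>G\<^sub>\<tau>\<^sup>p(y) = inner_amp \<cdot> exp (- inner_rate |y|\<^sup>2)\<close>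
  with \<open>mix_time = \<tau> + p (\<theta> - \<tau>)\<close>; the factor \<open>G\<^sub>\<theta>\<^bsup>p-1\<^esup>\<close> changes the rate to \<open>joint_rate\<close>, and
  \<open>e\<^bsup>(1-\<theta>)\<Delta>\<^esup>\<close> turns \<open>(a \<bullet> y) exp (- joint_rate |y|\<^sup>2)\<close> into
  \<open>spread\<^bsup>-N/2-1\<^esup> (a \<bullet> x) exp (- outer_rate |x|\<^sup>2)\<close>.
\<close>

definition mix_time :: "real \<Rightarrow> real \<Rightarrow> real \<Rightarrow> real" where
  "mix_time p \<theta> \<tau> = \<tau> + p * (\<theta> - \<tau>)"

definition inner_rate :: "real \<Rightarrow> real \<Rightarrow> real \<Rightarrow> real" where
  "inner_rate p \<theta> \<tau> = p / (4 * mix_time p \<theta> \<tau>)"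

definition inner_amp :: "real \<Rightarrow> real \<Rightarrow> real \<Rightarrow> real \<Rightarrow> real" where
  "inner_amp N p \<theta> \<tau> =
    (4 * pi) powr (- N * p / 2) * \<tau> powr (- N * (p - 1) / 2) * mix_time p \<theta> \<tau> powr (- N / 2)"

definition joint_rate :: "real \<Rightarrow> real \<Rightarrow> real \<Rightarrow> real" where
  "joint_rate p \<theta> \<tau> = (p - 1) / (4 * \<theta>) + inner_rate p \<theta> \<tau>"

definition spread :: "real \<Rightarrow> real \<Rightarrow> real \<Rightarrow> real" where
  "spread p \<theta> \<tau> = 1 + 4 * (1 - \<theta>) * joint_rate p \<theta> \<tau>"

definition outer_rate :: "real \<Rightarrow> real \<Rightarrow> real \<Rightarrow> real" where
  "outer_rate p \<theta> \<tau> = joint_rate p \<theta> \<tau> / spread p \<theta> \<tau>"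

definition outer_amp :: "real \<Rightarrow> real \<Rightarrow> real \<Rightarrow> real \<Rightarrow> real" where
  "outer_amp N p \<theta> \<tau> = 2 * inner_rate p \<theta> \<tau> * inner_amp N p \<theta> \<tau>
     * (4 * pi * \<theta>) powr (- (N / 2) * (p - 1)) * spread p \<theta> \<tau> powr (- N / 2 - 1)"

lemma borel_measurable_inner_rate [measurable]:
  "(\<lambda>z. inner_rate p (f z) (g z)) \<in> borel_measurable M"
  if [measurable]: "f \<in> borel_measurable M" "g \<in> borel_measurable M"
  unfolding inner_rate_def mix_time_def by measurable

lemma borel_measurable_inner_amp [measurable]:
  "(\<lambda>z. inner_amp N p (f z) (g z)) \<in> borel_measurable M"
  if [measurable]: "f \<in> borel_measurable M" "g \<in> borel_measurable M"
  unfolding inner_amp_def mix_time_def by measurable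

lemma borel_measurable_joint_rate [measurable]:
  "(\<lambda>z. joint_rate p (f z) (g z)) \<in> borel_measurable M"
  if [measurable]: "f \<in> borel_measurable M" "g \<in> borel_measurable M"
  unfolding joint_rate_def by measurable

lemma borel_measurable_outer_rate [measurable]:
  "(\<lambda>z. outer_rate p (f z) (g z)) \<in> borel_measurable M"
  if [measurable]: "f \<in> borel_measurable M" "g \<in> borel_measurable M"
  unfolding outer_rate_def spread_def by measurable

lemma borel_measurable_outer_amp [measurable]:
  "(\<lambda>z. outer_amp N p (f z) (g z)) \<in> borel_measurable M"
  if [measurable]: "f \<in> borel_measurable M" "g \<in> borel_measurable M"
  unfolding outer_amp_def spread_def by measurable

context
  fixes p \<theta> \<tau> :: real
  assumes p: "p \<ge> 1" and \<tau>: "0 < \<tau>" "\<tau> < \<theta>"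
begin

lemma mix_time_ge: "\<theta> \<le> mix_time p \<theta> \<tau>"
proof -
  have "1 * (\<theta> - \<tau>) \<le> p * (\<theta> - \<tau>)" using p \<tau> by (intro mult_right_mono) auto
  then show ?thesis unfolding mix_time_def by simp
qed

lemma mix_time_le: "mix_time p \<theta> \<tau> \<le> p * \<theta>"
  using mult_right_mono[of 1 p \<tau>] p \<tau> unfolding mix_time_def by (simp add: algebra_simps)

lemma inner_rate_pos: "0 < inner_rate p \<theta> \<tau>"
  using mix_time_ge p \<tau> unfolding inner_rate_def by simp

lemma inner_rate_ge: "1 / (4 * \<theta>) \<le> inner_rate p \<theta> \<tau>"
  using mix_time_le mix_time_ge p \<tau> unfolding inner_rate_def by (simp add: divide_simps)

lemma inner_rate_le: "inner_rate p \<theta> \<tau> \<le> p / (4 * \<theta>)"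
  using mix_time_ge p \<tau> unfolding inner_rate_def by (intro divide_left_mono) auto

lemma inner_amp_pos: "0 < inner_amp N p \<theta> \<tau>"
  using mix_time_ge \<tau> unfolding inner_amp_def by simp

lemma inner_amp_le:
  assumes "N \<ge> 0"
  shows "inner_amp N p \<theta> \<tau> \<le> (4 * pi) powr (- N * p / 2) * \<theta> powr (- N / 2) * \<tau> powr (- N * (p - 1) / 2)"
proof -
  have "mix_time p \<theta> \<tau> powr (- N / 2) \<le> \<theta> powr (- N / 2)"
    using assms mix_time_ge \<tau> by (intro powr_mono2') auto
  then have "(4 * pi) powr (- N * p / 2) * \<tau> powr (- N * (p - 1) / 2) * mix_time p \<theta> \<tau> powr (- N / 2)
      \<le> (4 * pi) powr (- N * p / 2) * \<tau> powr (- N * (p - 1) / 2) * \<theta> powr (- N / 2)"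
    by (rule mult_left_mono) simp
  then show ?thesis
    unfolding inner_amp_def by (simp add: mult_ac)
qed

lemma spread_ge:
  assumes "\<theta> < 1"
  shows "1 / \<theta> \<le> spread p \<theta> \<tau>"
proof -
  have "1 / (4 * \<theta>) \<le> joint_rate p \<theta> \<tau>"
    using inner_rate_ge p \<tau> unfolding joint_rate_def by (simp add: add_increasing)
  then have "4 * (1 - \<theta>) * (1 / (4 * \<theta>)) \<le> 4 * (1 - \<theta>) * joint_rate p \<theta> \<tau>"
    using assms by (intro mult_left_mono) auto
  moreover have "1 + 4 * (1 - \<theta>) * (1 / (4 * \<theta>)) = 1 / \<theta>"
    using \<tau> by (simp add: field_simps)
  ultimately show ?thesis
    unfolding spread_def by linarith
qed

lemma outer_rate_pos:
  assumes "\<theta> < 1"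
  shows "0 < outer_rate p \<theta> \<tau>"
proof -
  have "0 < joint_rate p \<theta> \<tau>"
    using inner_rate_pos p \<tau> unfolding joint_rate_def by (simp add: add_nonneg_pos)
  moreover have "0 < 1 / \<theta>" using \<tau> by simp
  then have "0 < spread p \<theta> \<tau>" using spread_ge[OF assms] by linarith
  ultimately show ?thesis
    unfolding outer_rate_def by simp
qed

lemma outer_amp_pos:
  assumes "\<theta> < 1"
  shows "0 < outer_amp N p \<theta> \<tau>"
proof -
  have "0 < 1 / \<theta>" using \<tau> by simp
  then have "0 < spread p \<theta> \<tau>" using spread_ge[OF assms] by linarith
  then show ?thesis
    using inner_rate_pos inner_amp_pos \<tau> unfolding outer_amp_def by simp
qed

lemma outer_amp_le:
  assumes "N \<ge> 0" and "\<theta> < 1"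
  shows "outer_amp N p \<theta> \<tau> \<le> p / 2 * (4 * pi) powr (- N * p / 2) * (4 * pi) powr (- N * (p - 1) / 2)
    * \<theta> powr (- N * (p - 1) / 2) * \<tau> powr (- N * (p - 1) / 2)"
proof -
  let ?K = "(4 * pi) powr (- N * p / 2)" and ?q = "N * (p - 1) / 2"
  have \<theta>: "0 < \<theta>" using \<tau> by simp
  have "spread p \<theta> \<tau> powr (- N / 2 - 1) \<le> (1 / \<theta>) powr (- N / 2 - 1)"
    using spread_ge[OF assms(2)] assms \<theta> by (intro powr_mono2') auto
  also have "(1 / \<theta>) powr (- N / 2 - 1) = 1 / \<theta> powr (- N / 2 - 1)"
    using \<theta> by (simp add: powr_divide)
  also have "\<dots> = \<theta> powr (N / 2 + 1)"
    using powr_minus_divide[of \<theta> "- N / 2 - 1"] by (simp add: ac_simps)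
  finally have spread: "spread p \<theta> \<tau> powr (- N / 2 - 1) \<le> \<theta> powr (N / 2 + 1)" .
  have "outer_amp N p \<theta> \<tau> \<le> (2 * (p / (4 * \<theta>))) * (?K * \<theta> powr (- N / 2) * \<tau> powr (- ?q))
      * (4 * pi * \<theta>) powr (- (N / 2) * (p - 1)) * \<theta> powr (N / 2 + 1)"
    unfolding outer_amp_def
    using inner_rate_le inner_rate_pos inner_amp_le[OF assms(1)] inner_amp_pos[of N] spread p \<theta>
    by (intro mult_mono) (auto simp: mult_nonneg_nonneg)
  also have "\<dots> = p / 2 * ?K * (4 * pi) powr (- ?q) * \<theta> powr (- ?q) * \<tau> powr (- ?q)
      * (\<theta> powr (- N / 2) * \<theta> powr (N / 2 + 1) / \<theta>)"
    using \<theta> by (simp add: powr_mult field_simps)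
  also have "\<theta> powr (- N / 2) * \<theta> powr (N / 2 + 1) / \<theta> = 1"
    using \<theta> by (simp add: powr_add[symmetric])
  finally show ?thesis by simp
qed

end

lemma heat_sg_heat_kernel_powr_mix_time:
  fixes y :: "real^'n"
  assumes p: "p > 0" and \<tau>: "0 < \<tau>" "\<tau> < \<theta>"
  shows "heat_sg (\<theta> - \<tau>) (\<lambda>z. heat_kernel \<tau> z powr p) y =
    inner_amp (real CARD('n)) p \<theta> \<tau> * exp (- inner_rate p \<theta> \<tau> * (norm y)\<^sup>2)"
proof -
  define N where "N = real CARD('n)"
  define m where "m = mix_time p \<theta> \<tau>"
  have m: "m > 0" using \<tau> p by (simp add: m_def mix_time_def add_pos_nonneg)
  have "1 + 4 * (\<theta> - \<tau>) * (p / (4 * \<tau>)) = m / \<tau>"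
    using \<tau> by (simp add: m_def mix_time_def field_simps)
  moreover have "p / (4 * \<tau>) / (m / \<tau>) = inner_rate p \<theta> \<tau>"
    using \<tau> m by (simp add: m_def inner_rate_def field_simps)
  moreover have "(4 * pi * \<tau>) powr (- (N / 2) * p) * (m / \<tau>) powr (- N / 2) = inner_amp N p \<theta> \<tau>"
  proof -
    have "(m / \<tau>) powr (- N / 2) = m powr (- N / 2) * \<tau> powr (N / 2)"
      using m \<tau> by (simp add: powr_divide powr_minus_divide)
    moreover have "(4 * pi * \<tau>) powr (- (N / 2) * p) = (4 * pi) powr (- N * p / 2) * \<tau> powr (- (N / 2) * p)"
      using \<tau> by (simp add: powr_mult)
    moreover have "- (N / 2) * p = - N * (p - 1) / 2 + - N / 2" by (simp add: field_simps)
    then have "\<tau> powr (- (N / 2) * p) = \<tau> powr (- N * (p - 1) / 2) * \<tau> powr (- N / 2)"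
      by (simp only: powr_add)
    ultimately show ?thesis
      using \<tau> unfolding inner_amp_def m_def by (simp add: mult_ac powr_add[symmetric])
  qed
  ultimately show ?thesis
    unfolding heat_kernel_powr[OF \<tau>(1)] heat_sg_cmult N_def[symmetric]
    using heat_sg_gaussian[of "\<theta> - \<tau>" "p / (4 * \<tau>)" y] \<tau> p by (simp add: N_def)
qed

lemma dir_deriv_heat_sg_heat_kernel_powr:
  fixes a y :: "real^'n"
  assumes "p > 0" and "0 < \<tau>" and "\<tau> < \<theta>"
  shows "dir_deriv a (heat_sg (\<theta> - \<tau>) (\<lambda>z. heat_kernel \<tau> z powr p)) y =
    - (a \<bullet> y) * (2 * inner_rate p \<theta> \<tau> * inner_amp (real CARD('n)) p \<theta> \<tau>
      * exp (- inner_rate p \<theta> \<tau> * (norm y)\<^sup>2))"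
  unfolding dir_deriv_def heat_sg_heat_kernel_powr_mix_time[OF assms]
  by (rule dir_deriv_gaussian[unfolded dir_deriv_def])

lemma set_integrable_inner_rate_mult_amp:
  assumes p: "p \<ge> 1" and N: "N \<ge> 0" and q: "N * (p - 1) / 2 < 1" and \<theta>: "0 < \<theta>"
  shows "set_integrable lborel {0<..<\<theta>} (\<lambda>\<tau>. inner_rate p \<theta> \<tau> * inner_amp N p \<theta> \<tau>)"
proof (rule set_integrable_Ioo_powr_dominated(1)[OF _ q \<theta>])
  fix \<tau> assume \<tau>: "0 < \<tau>" "\<tau> < \<theta>"
  have "inner_rate p \<theta> \<tau> * inner_amp N p \<theta> \<tau>
      \<le> p / (4 * \<theta>) * ((4 * pi) powr (- N * p / 2) * \<theta> powr (- N / 2) * \<tau> powr (- (N * (p - 1) / 2)))"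
    using inner_rate_le[OF p \<tau>] inner_amp_le[OF p \<tau> N] inner_rate_pos[OF p \<tau>]
      inner_amp_pos[OF p \<tau>, of N]
    by (intro mult_mono) auto
  then show "\<bar>inner_rate p \<theta> \<tau> * inner_amp N p \<theta> \<tau>\<bar>
      \<le> p / (4 * \<theta>) * (4 * pi) powr (- N * p / 2) * \<theta> powr (- N / 2) * \<tau> powr (- (N * (p - 1) / 2))"
    using inner_rate_pos[OF p \<tau>] inner_amp_pos[OF p \<tau>, of N] by (simp add: mult_ac)
qed measurable

lemma set_integrable_outer_amp:
  assumes p: "p \<ge> 1" and N: "N \<ge> 0" and q: "N * (p - 1) / 2 < 1" and \<theta>: "0 < \<theta>" "\<theta> < 1"
  shows "set_integrable lborel {0<..<\<theta>} (outer_amp N p \<theta>)"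
proof (rule set_integrable_Ioo_powr_dominated(1)[OF _ q \<theta>(1)])
  fix \<tau> assume \<tau>: "0 < \<tau>" "\<tau> < \<theta>"
  show "\<bar>outer_amp N p \<theta> \<tau>\<bar> \<le> p / 2 * (4 * pi) powr (- N * p / 2) * (4 * pi) powr (- N * (p - 1) / 2)
      * \<theta> powr (- N * (p - 1) / 2) * \<tau> powr (- (N * (p - 1) / 2))"
    using outer_amp_le[OF p \<tau> N \<theta>(2)] less_imp_le[OF outer_amp_pos[OF p \<tau> \<theta>(2)]] by simp
qed measurable

lemma S02_bracket_eq:
  fixes a y :: "real^'n"
  assumes p: "p > 0" and \<theta>: "0 < \<theta>"
  defines "N \<equiv> real CARD('n)"
  shows "heat_kernel \<theta> y powr (p - 1) *
      (LINT \<tau>:{0<..<\<theta>}|lborel. dir_deriv a (heat_sg (\<theta> - \<tau>) (\<lambda>z. heat_kernel \<tau> z powr p)) y)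
    = (LINT \<tau>:{0<..<\<theta>}|lborel. (- 2 * (4 * pi * \<theta>) powr (- (N / 2) * (p - 1)))
        * (inner_rate p \<theta> \<tau> * inner_amp N p \<theta> \<tau>) * ((a \<bullet> y) * exp (- joint_rate p \<theta> \<tau> * (norm y)\<^sup>2)))"
proof -
  let ?g = "\<lambda>\<tau>. inner_rate p \<theta> \<tau> * inner_amp N p \<theta> \<tau> * exp (- inner_rate p \<theta> \<tau> * (norm y)\<^sup>2)"
  have "dir_deriv a (heat_sg (\<theta> - \<tau>) (\<lambda>z. heat_kernel \<tau> z powr p)) y = (- 2 * (a \<bullet> y)) * ?g \<tau>"
    if "\<tau> \<in> {0<..<\<theta>}" for \<tau>
    using dir_deriv_heat_sg_heat_kernel_powr[where \<tau>=\<tau> and \<theta>=\<theta> and a=a and y=y] p that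
    by (simp add: N_def)
  then have "(LINT \<tau>:{0<..<\<theta>}|lborel. dir_deriv a (heat_sg (\<theta> - \<tau>) (\<lambda>z. heat_kernel \<tau> z powr p)) y)
      = (LINT \<tau>:{0<..<\<theta>}|lborel. (- 2 * (a \<bullet> y)) * ?g \<tau>)"
    by (intro set_lebesgue_integral_cong) auto
  also have "\<dots> = - 2 * (a \<bullet> y) * (LINT \<tau>:{0<..<\<theta>}|lborel. ?g \<tau>)"
    by (rule set_integral_mult_right)
  finally have bracket: "(LINT \<tau>:{0<..<\<theta>}|lborel. dir_deriv a (heat_sg (\<theta> - \<tau>) (\<lambda>z. heat_kernel \<tau> z powr p)) y)
      = - 2 * (a \<bullet> y) * (LINT \<tau>:{0<..<\<theta>}|lborel. ?g \<tau>)" .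
  have "(LINT \<tau>:{0<..<\<theta>}|lborel. (- 2 * (4 * pi * \<theta>) powr (- (N / 2) * (p - 1)))
        * (inner_rate p \<theta> \<tau> * inner_amp N p \<theta> \<tau>) * ((a \<bullet> y) * exp (- joint_rate p \<theta> \<tau> * (norm y)\<^sup>2)))
      = (LINT \<tau>:{0<..<\<theta>}|lborel. (- 2 * (a \<bullet> y) * heat_kernel \<theta> y powr (p - 1)) * ?g \<tau>)"
    unfolding heat_kernel_powr[OF \<theta>] joint_rate_def N_def
    by (intro set_lebesgue_integral_cong) (auto simp: exp_add[symmetric] algebra_simps)
  also have "\<dots> = - 2 * (a \<bullet> y) * heat_kernel \<theta> y powr (p - 1) * (LINT \<tau>:{0<..<\<theta>}|lborel. ?g \<tau>)"
    by (rule set_integral_mult_right)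
  finally show ?thesis
    unfolding bracket by simp
qed

lemma heat_sg_S02_bracket:
  fixes a x :: "real^'n"
  assumes p: "p > 1" and q: "real CARD('n) * (p - 1) / 2 < 1" and \<theta>: "0 < \<theta>" "\<theta> < 1"
  defines "N \<equiv> real CARD('n)"
  shows "heat_sg (1 - \<theta>) (\<lambda>y. heat_kernel \<theta> y powr (p - 1) *
      (LINT \<tau>:{0<..<\<theta>}|lborel. dir_deriv a (heat_sg (\<theta> - \<tau>) (\<lambda>z. heat_kernel \<tau> z powr p)) y)) x
    = (LINT \<tau>:{0<..<\<theta>}|lborel. - (a \<bullet> x) * outer_amp N p \<theta> \<tau> * exp (- outer_rate p \<theta> \<tau> * (norm x)\<^sup>2))"
proof -
  have p1: "p \<ge> 1" using p by simp
  have "set_integrable lborel {0<..<\<theta>}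
      (\<lambda>\<tau>. (- 2 * (4 * pi * \<theta>) powr (- (N / 2) * (p - 1))) * (inner_rate p \<theta> \<tau> * inner_amp N p \<theta> \<tau>))"
    using set_integrable_inner_rate_mult_amp[OF p1 _ _ \<theta>(1)] q by (intro set_integrable_mult_right) (simp add: N_def)
  moreover have "joint_rate p \<theta> \<in> borel_measurable lborel"
    using borel_measurable_joint_rate[of "\<lambda>_. \<theta>" lborel "\<lambda>\<tau>. \<tau>" p] by simp
  moreover have "(\<lambda>\<tau>. (- 2 * (4 * pi * \<theta>) powr (- (N / 2) * (p - 1))) * (inner_rate p \<theta> \<tau> * inner_amp N p \<theta> \<tau>))
      \<in> borel_measurable lborel"
    using borel_measurable_inner_rate[of "\<lambda>_. \<theta>" lborel "\<lambda>\<tau>. \<tau>" p]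
      borel_measurable_inner_amp[of "\<lambda>_. \<theta>" lborel "\<lambda>\<tau>. \<tau>" N p]
    by (intro borel_measurable_times borel_measurable_const) simp_all
  moreover have "(p - 1) / (4 * \<theta>) \<le> joint_rate p \<theta> \<tau>" if "\<tau> \<in> {0<..<\<theta>}" for \<tau>
    using inner_rate_pos[OF p1, of \<tau> \<theta>] that unfolding joint_rate_def by simp
  ultimately show ?thesis
    unfolding S02_bracket_eq[OF order.strict_trans[OF zero_less_one p] \<theta>(1)] N_def using p \<theta>
    by (subst heat_sg_set_integral_linear_gaussian[where b="(p - 1) / (4 * \<theta>)"]; simp)
      (auto intro!: set_lebesgue_integral_cong simp: outer_amp_def outer_rate_def spread_def mult_ac)
qed

definition S02_kernel :: "real^'n \<Rightarrow> real \<Rightarrow> real \<Rightarrow> real \<Rightarrow> real^'n \<Rightarrow> real" where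
  "S02_kernel a p \<theta> \<tau> x = - outer_amp (real CARD('n)) p \<theta> \<tau>
     * ((a \<bullet> a) - 2 * outer_rate p \<theta> \<tau> * (a \<bullet> x)\<^sup>2) * exp (- outer_rate p \<theta> \<tau> * (norm x)\<^sup>2)"

lemma S02_eq_simplex_integral:
  fixes a x :: "real^'n"
  assumes p: "p > 1" and q: "real CARD('n) * (p - 1) / 2 < 1"
  shows "S02 a p x = (LINT \<theta>:{0<..<1}|lborel. LINT \<tau>:{0<..<\<theta>}|lborel. S02_kernel a p \<theta> \<tau> x)"
  unfolding S02_def
proof (rule set_lebesgue_integral_cong, simp, intro allI impI)
  fix \<theta> :: real assume "\<theta> \<in> {0<..<1}"
  then have \<theta>: "0 < \<theta>" "\<theta> < 1" by auto
  have p1: "p \<ge> 1" using p by simp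
  let ?N = "real CARD('n)"
  have "heat_sg (1 - \<theta>) (\<lambda>y. heat_kernel \<theta> y powr (p - 1) *
      (LINT \<tau>:{0<..<\<theta>}|lborel. dir_deriv a (heat_sg (\<theta> - \<tau>) (\<lambda>z. heat_kernel \<tau> z powr p)) y))
    = (\<lambda>x. LINT \<tau>:{0<..<\<theta>}|lborel. - (a \<bullet> x) * outer_amp ?N p \<theta> \<tau> * exp (- outer_rate p \<theta> \<tau> * (norm x)\<^sup>2))"
    by (rule ext) (rule heat_sg_S02_bracket[OF p q \<theta>])
  moreover have "set_integrable lborel {0<..<\<theta>} (outer_amp ?N p \<theta>)"
    using set_integrable_outer_amp[OF p1 _ q \<theta>] by simp
  ultimately show "dir_deriv a (heat_sg (1 - \<theta>) (\<lambda>y. heat_kernel \<theta> y powr (p - 1) *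
      (LINT \<tau>:{0<..<\<theta>}|lborel. dir_deriv a (heat_sg (\<theta> - \<tau>) (\<lambda>z. heat_kernel \<tau> z powr p)) y))) x
    = (LINT \<tau>:{0<..<\<theta>}|lborel. S02_kernel a p \<theta> \<tau> x)"
    using outer_amp_pos[OF p1 _ _ \<theta>(2)] outer_rate_pos[OF p1 _ _ \<theta>(2)] unfolding S02_kernel_def
    by (simp only:) (rule dir_deriv_set_integral_linear_gaussian; auto intro: less_imp_le)
qed

lemma borel_measurable_S02_kernel [measurable]:
  "(\<lambda>(\<theta>, \<tau>). S02_kernel a p \<theta> \<tau> x) \<in> borel_measurable (lborel \<Otimes>\<^sub>M lborel)"
  unfolding S02_kernel_def by measurable

lemma continuous_on_S02_kernel: "continuous_on UNIV (S02_kernel a p \<theta> \<tau>)"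
  unfolding S02_kernel_def by (intro continuous_intros)

lemma S02_kernel_at_0:
  fixes a :: "real^'n"
  shows "S02_kernel a p \<theta> \<tau> 0 = - (a \<bullet> a) * outer_amp (real CARD('n)) p \<theta> \<tau>"
  unfolding S02_kernel_def by simp

lemma abs_S02_kernel_le:
  fixes a x :: "real^'n"
  assumes "p \<ge> 1" and "0 < \<tau>" "\<tau> < \<theta>" "\<theta> < 1"
  defines "N \<equiv> real CARD('n)" and "q \<equiv> real CARD('n) * (p - 1) / 2"
  shows "\<bar>S02_kernel a p \<theta> \<tau> x\<bar>
    \<le> 3 * (a \<bullet> a) * (p / 2 * (4 * pi) powr (- N * p / 2) * (4 * pi) powr (- q)) * \<theta> powr (- q) * \<tau> powr (- q)"
proof -
  have "\<bar>S02_kernel a p \<theta> \<tau> x\<bar> \<le> 3 * (a \<bullet> a) * outer_amp N p \<theta> \<tau>"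
    unfolding S02_kernel_def N_def
    using outer_amp_pos[OF assms(1-4)] outer_rate_pos[OF assms(1-4)]
    by (intro abs_linear_gaussian_deriv_le less_imp_le)
  also have "\<dots> \<le> 3 * (a \<bullet> a) * (p / 2 * (4 * pi) powr (- N * p / 2) * (4 * pi) powr (- q) * \<theta> powr (- q) * \<tau> powr (- q))"
    using outer_amp_le[OF assms(1-3) _ assms(4), of N]
    by (intro mult_left_mono) (simp_all add: N_def q_def)
  finally show ?thesis by (simp add: mult_ac)
qed

section \<open>Continuity, boundedness and sign of S02\<close>

lemma S02_eq_simplex_integral_fun:
  fixes a :: "real^'n"
  assumes "p > 1" and "real CARD('n) * (p - 1) / 2 < 1"
  shows "S02 a p = (\<lambda>x. LINT \<theta>:{0<..<1}|lborel. LINT \<tau>:{0<..<\<theta>}|lborel. S02_kernel a p \<theta> \<tau> x)"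
  by (intro ext S02_eq_simplex_integral[OF assms])

lemma continuous_on_S02:
  fixes a :: "real^'n"
  assumes p: "p > 1" and q: "real CARD('n) * (p - 1) / 2 < 1"
  shows "continuous_on UNIV (S02 a p)"
  unfolding S02_eq_simplex_integral_fun[OF p q]
  by (rule continuous_on_simplex_integral[OF _ q abs_S02_kernel_le continuous_on_S02_kernel])
    (use p in auto)

lemma bounded_S02:
  fixes a :: "real^'n"
  assumes p: "p > 1" and q: "real CARD('n) * (p - 1) / 2 < 1"
  shows "bounded (range (S02 a p))"
proof -
  note bound = simplex_integral(3)[OF borel_measurable_S02_kernel q abs_S02_kernel_le[OF less_imp_le[OF p]]]
  show ?thesis
    unfolding S02_eq_simplex_integral_fun[OF p q] bounded_iff using bound by (auto simp del: abs_le_iff)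
qed

lemma S02_at_0_neg:
  fixes a :: "real^'n"
  assumes p: "p > 1" and q: "real CARD('n) * (p - 1) / 2 < 1" and "a \<noteq> 0"
  shows "S02 a p 0 < 0"
proof -
  have "0 < (LINT \<theta>:{0<..<1}|lborel. LINT \<tau>:{0<..<\<theta>}|lborel. - S02_kernel a p \<theta> \<tau> 0)"
  proof (rule simplex_integral_pos[OF _ q])
    show "\<bar>- S02_kernel a p \<theta> \<tau> 0\<bar> \<le> 3 * (a \<bullet> a) * (p / 2 * (4 * pi) powr (- real CARD('n) * p / 2)
      * (4 * pi) powr (- (real CARD('n) * (p - 1) / 2))) * \<theta> powr (- (real CARD('n) * (p - 1) / 2))
      * \<tau> powr (- (real CARD('n) * (p - 1) / 2))" if "0 < \<tau>" "\<tau> < \<theta>" "\<theta> < 1" for \<theta> \<tau>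
      using abs_S02_kernel_le[of p \<tau> \<theta> a 0] p that by simp
    show "0 < - S02_kernel a p \<theta> \<tau> 0" if "0 < \<tau>" "\<tau> < \<theta>" "\<theta> < 1" for \<theta> \<tau>
      using outer_amp_pos[OF less_imp_le[OF p] that] assms(3) by (simp add: S02_kernel_at_0)
  qed measurable
  then show ?thesis
    unfolding S02_eq_simplex_integral[OF p q] set_lebesgue_integral_def by simp
qed

theorem mainTheorem11:
  fixes a :: "real ^ 'n" and p :: real
  assumes "1 + 1 / real CARD('n) < p" and "p < 1 + 3 / (2 * real CARD('n))"
    and "a \<noteq> 0"
  shows "continuous_on UNIV (S02 a p) \<and> bounded (range (S02 a p)) \<and> S02 a p 0 < 0"
proof -
  have N: "real CARD('n) \<ge> 1" by simp
  then have p: "p > 1"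
    using assms(1) divide_pos_pos[of 1 "real CARD('n)"] by linarith
  have "real CARD('n) * (p - 1) < real CARD('n) * (3 / (2 * real CARD('n)))"
    using assms(2) N by (intro mult_strict_left_mono) auto
  then have q: "real CARD('n) * (p - 1) / 2 < 1"
    using N by simp
  show ?thesis
    using continuous_on_S02[OF p q] bounded_S02[OF p q] S02_at_0_neg[OF p q assms(3)] by blast
qed

end
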